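(* For every positive integer $i$ there is a polynomial $R_i$ such that for every finite loopless multigraph $G$ and every standard fraternal completion of an orientation of $G$ of depth at least $i$, $$\Delta^-(\vec H_i)\le R_i\big(\widetilde\nabla^{\rm m}_{(i-1)/2}(G)\big).$$
   Context: A fraternal completion of a loopless directed multigraph $\vec G$ of depth $a$ is a triple $\mathfrak f=((E_1,\dots,E_a),w,\kappa)$ such that: $E_1=E(\vec G)$; for $2\le i\le a$, $E_i$ is the arc set of a directed multigraph with vertex set $V(\vec G)$; the sets $E_i$ are pairwise disjoint; $w(e)=i$ iff $e\in E_i$; $\kappa$ maps each $e\in\bigcup_{1<i\le a}E_i$ to a pair $(f,g)$ of arcs in $\bigcup_{i\le a}E_i$ with ${\rm tail}(f)\ne{\rm tail}(g)$, $w(e)=w(f)+w(g)$, ${\rm tail}(e)={\rm tail}(f)$, ${\rm head}(e)={\rm tail}(g)$, ${\rm head}(f)={\rm head}(g)$; and conversely for all $f\in E_i,g\in E_j$ with $i+j\le a$, ${\rm tail}(f)\ne{\rm tail}(g)$, ${\rm head}(f)={\rm head}(g)$ there is a unique $e\in E_{i+j}$ with $\kappa(e)\in\{(f,g),(g,f)\}$. $\vec H_i=(V(\vec G),E_i)$, $H_i$ is its underlying undirected multigraph, and $\Delta^-$ is maximum in-degree. A standard fraternal completion of depth $p$ of an orientation of $G$ is one built as follows: $\vec H_1=\vec G$ is an orientation of $G$ with $\Delta^-(\vec G)=\lceil\widetilde\nabla^{\rm m}_0(G)\rceil$; for $i<p$, the depth-$i$ completion is extended to depth $i+1$ (the underlying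 multigraph $H_{i+1}$ being determined by the previous levels) by choosing, for each new arc $e$, between $\kappa(e)=(f,g)$ and $\kappa(e)=(g,f)$ so that $\Delta^-(\vec H_{i+1})=\lceil\widetilde\nabla^{\rm m}_0(H_{i+1})\rceil$. For a half-integer $r\ge0$, $\widetilde\nabla^{\rm m}_r(G)$ is the maximum of $\|H\|/|H|$ over loopless multigraphs $H$ such that some $\le 2r$-subdivision of $H$ (each edge replaced by a path with at most $2r$ internal vertices, paths internally disjoint) is a subgraph of $G$; $\|H\|$ counts edges with multiplicity. *)

theory Defs
  imports "HOL-Computational_Algebra.Polynomial"
begin

definition loopless_multigraph :: "'v set \<Rightarrow> 'e set \<Rightarrow> ('e \<Rightarrow> 'v set) \<Rightarrow> bool" where
  "loopless_multigraph V E ends \<longleftrightarrow>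
     finite V \<and> finite E \<and> (\<forall>e\<in>E. ends e \<subseteq> V \<and> card (ends e) = 2)"

definition is_orientation :: "'e set \<Rightarrow> ('e \<Rightarrow> 'v set) \<Rightarrow> ('e \<Rightarrow> 'v) \<Rightarrow> ('e \<Rightarrow> 'v) \<Rightarrow> bool" where
  "is_orientation E ends t h \<longleftrightarrow> (\<forall>e\<in>E. ends e = {t e, h e})"

definition interior :: "'a list \<Rightarrow> 'a list" where
  "interior xs = butlast (tl xs)"

text \<open>A (\<le> 2r)-subdivision of a loopless multigraph H with vertex set B and m edges
  (edge k realised by the path with vertex list P k and edge list Q k in G)
  is a subgraph of G = (V,E,ends).\<close>
definition subdiv_in :: "'v set \<Rightarrow> 'e set \<Rightarrow> ('e \<Rightarrow> 'v set) \<Rightarrow> real \<Rightarrow>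
    'v set \<Rightarrow> nat \<Rightarrow> (nat \<Rightarrow> 'v list) \<Rightarrow> (nat \<Rightarrow> 'e list) \<Rightarrow> bool" where
  "subdiv_in V E ends r B m P Q \<longleftrightarrow>
     B \<subseteq> V \<and>
     (\<forall>k<m. length (P k) \<ge> 2 \<and> distinct (P k) \<and> set (P k) \<subseteq> V \<and>
        length (Q k) = length (P k) - 1 \<and>
        (\<forall>j<length (Q k). Q k ! j \<in> E \<and> ends (Q k ! j) = {P k ! j, P k ! Suc j}) \<and>
        hd (P k) \<in> B \<and> last (P k) \<in> B \<and> set (interior (P k)) \<inter> B = {} \<and>
        real (length (interior (P k))) \<le> 2 * r) \<and>
     (\<forall>k<m. \<forall>k'<m. k \<noteq> k' \<longrightarrow>
        set (interior (P k)) \<inter> set (interior (P k')) = {} \<and> set (Q k) \<inter> set (Q k') = {})"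

text \<open>The multigraph topological greatest reduced average density
  (max over H of ||H|| / |H|; the 0 only matters for the empty graph).\<close>
definition tgrad_m :: "'v set \<Rightarrow> 'e set \<Rightarrow> ('e \<Rightarrow> 'v set) \<Rightarrow> real \<Rightarrow> real" where
  "tgrad_m V E ends r = Sup (insert 0
     {real m / real (card B) | B m P Q. B \<noteq> {} \<and> subdiv_in V E ends r B m P Q})"

definition max_indeg :: "'v set \<Rightarrow> 'e set \<Rightarrow> ('e \<Rightarrow> 'v) \<Rightarrow> nat" where
  "max_indeg V A h = Max (insert 0 ((\<lambda>v. card {e\<in>A. h e = v}) ` V))"

text \<open>Fraternal completion ((Es 1,...,Es a), w, \<kappa>) of depth a of the directed multigraph
  (V, A, t, h); the weight w is encoded by membership in the levels Es i.\<close>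
definition fraternal_completion :: "'v set \<Rightarrow> ('e \<Rightarrow> 'v) \<Rightarrow> ('e \<Rightarrow> 'v) \<Rightarrow> 'e set \<Rightarrow>
    (nat \<Rightarrow> 'e set) \<Rightarrow> ('e \<Rightarrow> 'e \<times> 'e) \<Rightarrow> nat \<Rightarrow> bool" where
  "fraternal_completion V t h A Es \<kappa> a \<longleftrightarrow>
     Es 1 = A \<and>
     (\<forall>i\<in>{1..a}. finite (Es i) \<and> (\<forall>e\<in>Es i. t e \<in> V \<and> h e \<in> V)) \<and>
     (\<forall>i\<in>{1..a}. \<forall>j\<in>{1..a}. i \<noteq> j \<longrightarrow> Es i \<inter> Es j = {}) \<and>
     (\<forall>i\<in>{2..a}. \<forall>e\<in>Es i. \<exists>j k f g. 1 \<le> j \<and> 1 \<le> k \<and> j + k = i \<and>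
        f \<in> Es j \<and> g \<in> Es k \<and> \<kappa> e = (f, g) \<and> t f \<noteq> t g \<and>
        t e = t f \<and> h e = t g \<and> h f = h g) \<and>
     (\<forall>i j f g. 1 \<le> i \<and> 1 \<le> j \<and> i + j \<le> a \<and> f \<in> Es i \<and> g \<in> Es j \<and>
        t f \<noteq> t g \<and> h f = h g \<longrightarrow>
        (\<exists>!e. e \<in> Es (i + j) \<and> (\<kappa> e = (f, g) \<or> \<kappa> e = (g, f))))"

definition standard_fc :: "'v set \<Rightarrow> 'e set \<Rightarrow> ('e \<Rightarrow> 'v set) \<Rightarrow> ('e \<Rightarrow> 'v) \<Rightarrow> ('e \<Rightarrow> 'v) \<Rightarrow>
    (nat \<Rightarrow> 'e set) \<Rightarrow> ('e \<Rightarrow> 'e \<times> 'e) \<Rightarrow> nat \<Rightarrow> bool" where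
  "standard_fc V EG ends t h Es \<kappa> p \<longleftrightarrow>
     loopless_multigraph V EG ends \<and> is_orientation EG ends t h \<and>
     fraternal_completion V t h EG Es \<kappa> p \<and>
     (\<forall>i\<in>{1..p}. int (max_indeg V (Es i) h) = \<lceil>tgrad_m V (Es i) (\<lambda>e. {t e, h e}) 0\<rceil>)"

end

theory Submission
  imports Defs
begin

text \<open>
  Let H_1 = G, H_2, ..., H_p be the levels of a standard fraternal completion.
  Unfolding the fraternal pairs recursively, every arc e of level i expands into a walk of G
  with exactly i edges from its tail to its head.  Write M_i for the sum of the maximum
  in-degrees of the levels below i.  A counting argument over the fraternal pairs shows that
  at most (M_i + 1)^(2i) arcs of level i have an expansion passing through a fixed vertex
  as an interior vertex.  Hence, given a subgraph of H_i on a vertex set B with m edges, we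
  can replace every edge by a B-path inside its expansion; each such path conflicts with at
  most (i+1)(M_i+1)^(2i) others, and a greedy selection of pairwise internally disjoint paths
  yields a topological minor of G of depth (i-1)/2 on B with a proportional number of edges.
  Since the completion is standard, the maximum in-degree of H_i is the ceiling of its density,
  so it is bounded linearly in the density of G at depth (i-1)/2 with a coefficient polynomial
  in M_i.  Strong induction on i then gives a polynomial bound c (x+1)^N.
\<close>

section \<open>Walks in a multigraph\<close>

fun walk :: "'e set \<Rightarrow> ('e \<Rightarrow> 'v set) \<Rightarrow> 'v list \<Rightarrow> 'e list \<Rightarrow> bool" where
  "walk E en [v] [] = True"
| "walk E en (u # v # ws) (e # es) = (e \<in> E \<and> en e = {u, v} \<and> walk E en (v # ws) es)"
| "walk E en _ _ = False"

lemma walk_length: "walk E en ws es \<Longrightarrow> length ws = Suc (length es)"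
  by (induction E en ws es rule: walk.induct) auto

lemma walk_append:
  "walk E en (xs @ [v]) es1 \<Longrightarrow> walk E en (v # ys) es2 \<Longrightarrow> walk E en (xs @ v # ys) (es1 @ es2)"
proof (induction xs arbitrary: es1)
  case Nil
  then show ?case by (cases es1) auto
next
  case (Cons a xs)
  then show ?case by (cases xs; cases es1) auto
qed

lemma walk_split:
  "walk E en (xs @ v # ys) es \<Longrightarrow>
     walk E en (xs @ [v]) (take (length xs) es) \<and> walk E en (v # ys) (drop (length xs) es)"
proof (induction xs arbitrary: es)
  case Nil
  then show ?case by (cases ys; cases es) auto
next
  case (Cons a xs)
  then show ?case by (cases xs; cases es) auto
qed

text \<open>Edges are undirected, so a walk can be traversed backwards.\<close>
lemma walk_rev: "walk E en ws es \<Longrightarrow> walk E en (rev ws) (rev es)"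
proof (induction E en ws es rule: walk.induct)
  case (2 E en u v ws e es)
  then have "walk E en (rev ws @ [v]) (rev es)" by simp
  moreover have "walk E en [v, u] [e]" using 2 by (auto simp: insert_commute)
  ultimately show ?case using walk_append by fastforce
qed auto

lemma walk_nth:
  "walk E en ws es \<Longrightarrow> j < length es \<Longrightarrow> es ! j \<in> E \<and> en (es ! j) = {ws ! j, ws ! Suc j}"
  by (induction E en ws es arbitrary: j rule: walk.induct) (auto simp: nth_Cons split: nat.splits)

lemma walk_edge_ends: "walk E en ws es \<Longrightarrow> e \<in> set es \<Longrightarrow> e \<in> E \<and> en e \<subseteq> set ws"
  by (induction E en ws es rule: walk.induct) auto

lemma walk_vertices:
  "walk E en ws es \<Longrightarrow> es \<noteq> [] \<Longrightarrow> \<forall>e\<in>E. en e \<subseteq> V \<Longrightarrow> set ws \<subseteq> V"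
proof (induction E en ws es rule: walk.induct)
  case (2 E en u v ws e es)
  then show ?case by (cases es; cases ws) auto
qed auto

lemma walk_to_path:
  "walk E en ws es \<Longrightarrow> \<exists>ps qs. walk E en ps qs \<and> distinct ps \<and> hd ps = hd ws \<and>
      last ps = last ws \<and> set ps \<subseteq> set ws \<and> set qs \<subseteq> set es"
proof (induction ws arbitrary: es)
  case Nil
  then show ?case by simp
next
  case (Cons x rest)
  show ?case
  proof (cases rest)
    case Nil
    then show ?thesis using Cons.prems by (intro exI[of _ "[x]"] exI[of _ "[]"]) auto
  next
    case (Cons y rest')
    with Cons.prems obtain e0 es' where es: "es = e0 # es'" and e0: "e0 \<in> E" "en e0 = {x, y}"
      and w: "walk E en rest es'"
      by (cases es) auto
    from Cons.IH[OF w] obtain ps qs where ps: "walk E en ps qs" "distinct ps" "hd ps = hd rest"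
      "last ps = last rest" "set ps \<subseteq> set rest" "set qs \<subseteq> set es'" by blast
    have "ps \<noteq> []" using walk_length[OF ps(1)] by auto
    show ?thesis
    proof (cases "x \<in> set ps")
      case False
      with \<open>ps \<noteq> []\<close> ps e0 es Cons show ?thesis
        by (intro exI[of _ "x # ps"] exI[of _ "e0 # qs"]) (cases ps; auto)
    next
      case True
      (* the path revisits x: keep only its part from x on *)
      then obtain pre post where pp: "ps = pre @ x # post" by (meson split_list)
      with walk_split[of E en pre x post qs] ps(1)
      have "walk E en (x # post) (drop (length pre) qs)" by simp
      moreover have "set (drop (length pre) qs) \<subseteq> set qs" by (rule set_drop_subset)
      ultimately show ?thesis using ps pp es Cons
        by (intro exI[of _ "x # post"] exI[of _ "drop (length pre) qs"]) auto
    qed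
  qed
qed

lemma prefix_to_first_hit:
  "ws \<noteq> [] \<Longrightarrow> last ws \<in> B \<Longrightarrow>
    \<exists>ws' zs. ws = ws' @ zs \<and> ws' \<noteq> [] \<and> last ws' \<in> B \<and> set (butlast ws') \<inter> B = {}"
proof (induction ws)
  case (Cons v rest)
  show ?case
  proof (cases "v \<in> B \<or> rest = []")
    case True
    then show ?thesis using Cons.prems by (intro exI[of _ "[v]"] exI[of _ rest]) auto
  next
    case False
    with Cons obtain ws' zs where
      "rest = ws' @ zs" "ws' \<noteq> []" "last ws' \<in> B" "set (butlast ws') \<inter> B = {}" by auto
    with False show ?thesis by (intro exI[of _ "v # ws'"] exI[of _ zs]) auto
  qed
qed simp

lemma interior_subset: "set (interior ws) \<subseteq> set ws"
  unfolding interior_def by (cases ws) (auto dest: in_set_butlastD)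

lemma set_subset_interior: "set ws \<subseteq> set (interior ws) \<union> {hd ws, last ws}"
proof (cases ws rule: rev_cases)
  case (snoc ys y)
  then show ?thesis by (cases ys) (auto simp: interior_def)
qed simp

lemma interior_Cons_Cons: "ws \<noteq> [] \<Longrightarrow> interior (u # v # ws) = v # interior (v # ws)"
  by (simp add: interior_def)

lemma interior_glue:
  assumes "length ws1 \<ge> 2" "length ws2 \<ge> 2"
  shows "set (interior (ws1 @ tl (rev ws2))) \<subseteq> set (interior ws1) \<union> {last ws1} \<union> set (interior ws2)"
proof -
  obtain a xs where w1: "ws1 = a # xs" using assms by (cases ws1) auto
  with assms(1) have "xs \<noteq> []" by auto
  obtain b ys where w2: "ws2 = rev ys @ [b]"
    using assms by (cases ws2 rule: rev_cases) (auto, metis rev_rev_ident)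
  with assms(2) have "ys \<noteq> []" by auto
  have "interior (ws1 @ tl (rev ws2)) = xs @ butlast ys"
    using w1 w2 \<open>ys \<noteq> []\<close> by (simp add: interior_def butlast_append)
  moreover have "set xs \<subseteq> set (interior ws1) \<union> {last ws1}"
    using w1 \<open>xs \<noteq> []\<close> by (cases xs rule: rev_cases) (auto simp: interior_def)
  moreover have "interior ws2 = rev (butlast ys)"
    using w2 \<open>ys \<noteq> []\<close> by (cases ys rule: rev_cases) (auto simp: interior_def)
  ultimately show ?thesis by auto
qed

lemma walk_edge_meets_interior:
  "walk E en ws es \<Longrightarrow> 2 \<le> length es \<Longrightarrow> \<epsilon> \<in> set es \<Longrightarrow> en \<epsilon> \<inter> set (interior ws) \<noteq> {}"
proof (induction E en ws es rule: walk.induct)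
  case (2 E en u v ws e es)
  have "ws \<noteq> []" using 2 walk_length[of E en "v # ws" es] by auto
  then have int: "interior (u # v # ws) = v # interior (v # ws)" by (rule interior_Cons_Cons)
  have "\<epsilon> = e \<or> (\<epsilon> \<in> set es \<and> 2 \<le> length es) \<or> es = [\<epsilon>]"
    using "2.prems" by (cases es; cases "tl es") auto
  then consider "\<epsilon> = e" | "\<epsilon> \<in> set es" "2 \<le> length es" | "es = [\<epsilon>]" by blast
  then show ?case
  proof cases
    case 1
    then show ?thesis using 2 int by auto
  next
    case 2
    then show ?thesis using "2.IH" "2.prems" int by auto
  next
    case 3
    then have "en \<epsilon> = {v, hd ws}" using "2.prems" \<open>ws \<noteq> []\<close> by (cases ws) auto
    then show ?thesis using int by auto
  qed
qed auto

lemma walk_contains_B_path: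
  assumes w: "walk E en ws es" and ends: "hd ws \<in> B" "last ws \<in> B" "hd ws \<noteq> last ws"
  shows "\<exists>P Q. walk E en P Q \<and> distinct P \<and> 2 \<le> length P \<and> length P \<le> length ws \<and>
     hd P \<in> B \<and> last P \<in> B \<and> set (interior P) \<inter> B = {} \<and>
     set (interior P) \<subseteq> set (interior ws) \<and> set Q \<subseteq> set es"
proof -
  obtain ps qs where ps: "walk E en ps qs" "distinct ps" "hd ps = hd ws" "last ps = last ws"
    "set ps \<subseteq> set ws" "set qs \<subseteq> set es" using walk_to_path[OF w] by blast
  obtain x rest where psx: "ps = x # rest" using walk_length[OF ps(1)] by (cases ps) auto
  have "rest \<noteq> []" using psx ps(3,4) ends(3) by auto
  moreover have "last rest \<in> B" using psx ps(4) ends(2) \<open>rest \<noteq> []\<close> by simp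
  ultimately obtain ws' zs where cut: "rest = ws' @ zs" "ws' \<noteq> []" "last ws' \<in> B"
      "set (butlast ws') \<inter> B = {}"
    using prefix_to_first_hit[of rest B] by auto
  define P where "P = x # ws'"
  have ps_eq: "ps = (x # butlast ws') @ last ws' # zs" using psx cut(1,2) by simp
  have PW: "walk E en P (take (length ws') qs)"
    using walk_split[of E en "x # butlast ws'" "last ws'" zs qs] ps(1) ps_eq cut(2)
    unfolding P_def by simp
  have psP: "ps = P @ zs" unfolding P_def using psx cut(1) by simp
  have "length P \<le> length ps" using psP by simp
  also have "\<dots> = card (set ps)" using ps(2) by (simp add: distinct_card)
  also have "\<dots> \<le> card (set ws)" using ps(5) by (intro card_mono) auto
  also have "\<dots> \<le> length ws" by (rule card_length)
  finally have lP: "length P \<le> length ws" .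
  have intP: "interior P = butlast ws'" unfolding P_def interior_def by simp
  have intsub: "set (interior P) \<subseteq> set (interior ws)"
  proof
    fix u assume "u \<in> set (interior P)"
    then have ub: "u \<in> set (butlast ws')" using intP by simp
    have "distinct (x # butlast ws' @ last ws' # zs)" using ps(2) ps_eq by simp
    moreover have "last ps \<in> set (last ws' # zs)" using ps_eq by (cases zs rule: rev_cases) auto
    ultimately have "u \<noteq> hd ps" "u \<noteq> last ps" using ub psx by auto
    moreover have "u \<in> set ws" using ub ps(5) psx cut(1) by (auto dest: in_set_butlastD)
    ultimately show "u \<in> set (interior ws)" using set_subset_interior[of ws] ps(3,4) by auto
  qed
  have "set (take (length ws') qs) \<subseteq> set es" using ps(6) set_take_subset by fastforce
  moreover have "2 \<le> length P" unfolding P_def using cut(2) by (cases ws') auto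
  moreover have "distinct P" using ps(2) psP by simp
  ultimately show ?thesis using PW lP intP intsub cut ends(1) ps(3) psx unfolding P_def
    by (intro exI[of _ P] exI[of _ "take (length ws') qs"]) (auto simp: P_def)
qed

section \<open>Topological subdivisions and the density tgrad_m\<close>

definition branch_path :: "'v set \<Rightarrow> 'e set \<Rightarrow> ('e \<Rightarrow> 'v set) \<Rightarrow> real \<Rightarrow> 'v set \<Rightarrow>
    'v list \<Rightarrow> 'e list \<Rightarrow> bool" where
  "branch_path V E en r B P Q \<longleftrightarrow>
     length P \<ge> 2 \<and> distinct P \<and> set P \<subseteq> V \<and> length Q = length P - 1 \<and>
     (\<forall>j<length Q. Q ! j \<in> E \<and> en (Q ! j) = {P ! j, P ! Suc j}) \<and>
     hd P \<in> B \<and> last P \<in> B \<and> set (interior P) \<inter> B = {} \<and>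
     real (length (interior P)) \<le> 2 * r"

definition internally_disjoint :: "'v list \<Rightarrow> 'e list \<Rightarrow> 'v list \<Rightarrow> 'e list \<Rightarrow> bool" where
  "internally_disjoint P Q P' Q' \<longleftrightarrow>
     set (interior P) \<inter> set (interior P') = {} \<and> set Q \<inter> set Q' = {}"

lemma subdiv_in_iff:
  "subdiv_in V E en r B m P Q \<longleftrightarrow> B \<subseteq> V \<and> (\<forall>k<m. branch_path V E en r B (P k) (Q k)) \<and>
     (\<forall>k<m. \<forall>k'<m. k \<noteq> k' \<longrightarrow> internally_disjoint (P k) (Q k) (P k') (Q k'))"
  unfolding subdiv_in_def branch_path_def internally_disjoint_def by (rule refl)

lemma walk_branch_path:
  assumes "walk E en P Q" "distinct P" "2 \<le> length P" "real (length P) \<le> 2 * r + 2"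
    "hd P \<in> B" "last P \<in> B" "set (interior P) \<inter> B = {}" "\<forall>e\<in>E. en e \<subseteq> V"
  shows "branch_path V E en r B P Q"
proof -
  have "length P = Suc (length Q)" using walk_length[OF assms(1)] .
  moreover from this assms(3) have "Q \<noteq> []" by auto
  moreover have "length (interior P) = length P - 2" unfolding interior_def by simp
  ultimately show ?thesis
    using assms walk_vertices[OF assms(1)] walk_nth[OF assms(1)]
    unfolding branch_path_def by auto
qed

lemma branch_path_zero:
  assumes "branch_path V E en 0 B P Q"
  shows "\<exists>a b. P = [a, b] \<and> Q = [hd Q] \<and> hd Q \<in> E \<and> en (hd Q) = {a, b} \<and>
           a \<noteq> b \<and> a \<in> B \<and> b \<in> B"
proof -
  have "length P = 2" using assms unfolding branch_path_def interior_def by auto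
  then obtain a b where P: "P = [a, b]" by (auto simp: numeral_2_eq_2 length_Suc_conv)
  with assms have "length Q = 1" unfolding branch_path_def by simp
  then obtain q where "Q = [q]" by (cases Q) auto
  with assms P show ?thesis unfolding branch_path_def by auto
qed

lemma branch_path_edge: "branch_path V E en r B P Q \<Longrightarrow> Q \<noteq> [] \<and> hd Q \<in> E"
  unfolding branch_path_def by (cases Q) force+

text \<open>Distinct branch paths use disjoint edge sets, so they have distinct first edges.\<close>
lemma subdiv_first_edges_inj:
  assumes "subdiv_in V E en r B m P Q"
  shows "inj_on (\<lambda>k. hd (Q k)) {..<m}"
proof (rule inj_onI)
  fix k k' assume kk: "k \<in> {..<m}" "k' \<in> {..<m}" "hd (Q k) = hd (Q k')"
  have "branch_path V E en r B (P k) (Q k)" "branch_path V E en r B (P k') (Q k')"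
    using assms kk unfolding subdiv_in_iff by auto
  then have "Q k \<noteq> []" "Q k' \<noteq> []" using branch_path_edge by blast+
  then have "\<not> internally_disjoint (P k) (Q k) (P k') (Q k')"
    using kk(3) unfolding internally_disjoint_def by (cases "Q k"; cases "Q k'") auto
  then show "k = k'" using assms kk unfolding subdiv_in_iff by auto
qed

lemma subdiv_count_le:
  assumes "subdiv_in V E en r B m P Q" "finite E"
  shows "m \<le> card E"
proof -
  have "(\<lambda>k. hd (Q k)) ` {..<m} \<subseteq> E"
    using assms(1) branch_path_edge unfolding subdiv_in_iff by blast
  then show ?thesis
    using card_inj_on_le[OF subdiv_first_edges_inj[OF assms(1)] _ assms(2)] by simp
qed

lemma subdiv_zero_edges:
  assumes "subdiv_in V E en 0 B m P Q"
  shows "\<exists>q. inj_on q {..<m} \<and>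
           (\<forall>k<m. q k \<in> E \<and> (\<exists>a b. a \<noteq> b \<and> a \<in> B \<and> b \<in> B \<and> en (q k) = {a, b}))"
  using assms subdiv_first_edges_inj[OF assms] branch_path_zero unfolding subdiv_in_iff
  by (intro exI[of _ "\<lambda>k. hd (Q k)"]) fastforce

lemma tgrad_bdd:
  assumes "finite E"
  shows "bdd_above (insert 0 {real m / real (card B) | B m P Q. B \<noteq> {} \<and> subdiv_in V E en r B m P Q})"
proof (rule bdd_aboveI[where M = "real (card E)"])
  fix x assume "x \<in> insert 0 {real m / real (card B) | B m P Q. B \<noteq> {} \<and> subdiv_in V E en r B m P Q}"
  then consider "x = 0" | B m P Q where "x = real m / real (card B)" "subdiv_in V E en r B m P Q"
    by auto
  then show "x \<le> real (card E)"
  proof cases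
    case (2 B m P Q)
    have "real m / real (card B) \<le> real m"
    proof (cases "card B = 0")
      case False
      then have "real m / real (card B) \<le> real m / 1" by (intro divide_left_mono) auto
      then show ?thesis by simp
    qed simp
    also have "\<dots> \<le> real (card E)" using subdiv_count_le[OF 2(2) assms] by simp
    finally show ?thesis using 2 by simp
  qed simp
qed

lemma tgrad_ge:
  assumes "finite E" "B \<noteq> {}" "subdiv_in V E en r B m P Q"
  shows "real m / real (card B) \<le> tgrad_m V E en r"
  unfolding tgrad_m_def using assms by (intro cSup_upper tgrad_bdd) auto

lemma tgrad_nonneg: "finite E \<Longrightarrow> 0 \<le> tgrad_m V E en r"
  unfolding tgrad_m_def by (intro cSup_upper tgrad_bdd) auto

lemma tgrad_le:
  assumes "0 \<le> c"
    and "\<And>B m P Q. B \<noteq> {} \<Longrightarrow> subdiv_in V E en r B m P Q \<Longrightarrow> real m / real (card B) \<le> c"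
  shows "tgrad_m V E en r \<le> c"
  unfolding tgrad_m_def using assms(1) by (intro cSup_least) (auto intro!: assms(2))

lemma tgrad_mono:
  assumes "finite E" "r1 \<le> r2"
  shows "tgrad_m V E en r1 \<le> tgrad_m V E en r2"
proof -
  have "subdiv_in V E en r2 B m P Q" if "subdiv_in V E en r1 B m P Q" for B m P Q
    using that assms(2) unfolding subdiv_in_iff branch_path_def by (meson order_trans mult_left_mono zero_le_numeral)
  then show ?thesis using assms(1) by (intro tgrad_le tgrad_nonneg tgrad_ge) auto
qed

lemma greedy_independent:
  assumes "finite X" "\<forall>a\<in>X. card {b\<in>X. b \<noteq> a \<and> C a b} \<le> K" "\<And>a b. C a b \<Longrightarrow> C b a"
  shows "\<exists>T\<subseteq>X. (\<forall>a\<in>T. \<forall>b\<in>T. a \<noteq> b \<longrightarrow> \<not> C a b) \<and> card X \<le> (K + 1) * card T"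
  using assms(1,2)
proof (induction "card X" arbitrary: X rule: less_induct)
  case less
  show ?case
  proof (cases "X = {}")
    case False
    then obtain a where a: "a \<in> X" by auto
    define N where "N = {b\<in>X. b \<noteq> a \<and> C a b}"
    define X' where "X' = X - insert a N"
    have finX': "finite X'" using less.prems unfolding X'_def by auto
    have lt: "card X' < card X" unfolding X'_def using a less.prems(1) by (intro psubset_card_mono) auto
    have sparse: "\<forall>c\<in>X'. card {b\<in>X'. b \<noteq> c \<and> C c b} \<le> K"
    proof
      fix c assume "c \<in> X'"
      then have "card {b\<in>X'. b \<noteq> c \<and> C c b} \<le> card {b\<in>X. b \<noteq> c \<and> C c b}"
        using less.prems(1) unfolding X'_def by (intro card_mono) auto
      also have "\<dots> \<le> K" using less.prems(2) \<open>c \<in> X'\<close> unfolding X'_def by blast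
      finally show "card {b\<in>X'. b \<noteq> c \<and> C c b} \<le> K" .
    qed
    from less.hyps[OF lt finX' sparse] obtain T' where T': "T' \<subseteq> X'"
      "\<forall>a\<in>T'. \<forall>b\<in>T'. a \<noteq> b \<longrightarrow> \<not> C a b" "card X' \<le> (K + 1) * card T'" by blast
    have finT': "finite T'" using T'(1) finX' finite_subset by blast
    have aT': "a \<notin> T'" and nb: "\<And>b. b \<in> T' \<Longrightarrow> \<not> C a b"
      using T'(1) unfolding X'_def N_def by auto
    have finN: "finite N" using less.prems(1) unfolding N_def by auto
    have "X \<subseteq> X' \<union> insert a N" unfolding X'_def by auto
    then have "card X \<le> card (X' \<union> insert a N)" using finX' finN by (intro card_mono) auto
    also have "\<dots> \<le> card X' + card (insert a N)" by (rule card_Un_le)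
    finally have "card X \<le> card X' + card (insert a N)" .
    moreover have "card (insert a N) \<le> card N + 1" using finN by (simp add: card_insert_if)
    moreover have "card N \<le> K" using less.prems(2) a unfolding N_def by blast
    ultimately have "card X \<le> (K + 1) * card (insert a T')" using T'(3) aT' finT' by simp
    moreover have "insert a T' \<subseteq> X" using T'(1) a unfolding X'_def by auto
    moreover have "\<forall>x\<in>insert a T'. \<forall>y\<in>insert a T'. x \<noteq> y \<longrightarrow> \<not> C x y"
      using T'(2) nb assms(3) by blast
    ultimately show ?thesis by blast
  qed simp
qed

lemma subdiv_from_sparse_paths:
  assumes "B \<subseteq> V" "\<forall>k<m. branch_path V E en r B (P k) (Q k)"
    and "\<forall>k<m. card {k'\<in>{..<m}. k' \<noteq> k \<and> \<not> internally_disjoint (P k) (Q k) (P k') (Q k')} \<le> K"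
  shows "\<exists>m' P' Q'. m \<le> (K + 1) * m' \<and> subdiv_in V E en r B m' P' Q'"
proof -
  let ?C = "\<lambda>k k'. \<not> internally_disjoint (P k) (Q k) (P k') (Q k')"
  have sym: "\<And>a b. ?C a b \<Longrightarrow> ?C b a" unfolding internally_disjoint_def by blast
  from greedy_independent[of "{..<m}" ?C K, OF _ _ sym] assms(3)
  obtain T where T: "T \<subseteq> {..<m}" "\<forall>a\<in>T. \<forall>b\<in>T. a \<noteq> b \<longrightarrow> \<not> ?C a b"
      "card {..<m} \<le> (K + 1) * card T"
    by blast
  obtain g where "bij_betw g {0..<card T} T"
    using ex_bij_betw_nat_finite finite_subset[OF T(1)] by blast
  then have gT: "\<And>j. j < card T \<Longrightarrow> g j \<in> T" and ginj: "inj_on g {0..<card T}"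
    by (auto simp: bij_betw_def)
  have "\<forall>j<card T. branch_path V E en r B (P (g j)) (Q (g j))"
    using assms(2) T(1) gT by blast
  moreover have "\<forall>j<card T. \<forall>j'<card T. j \<noteq> j' \<longrightarrow>
      internally_disjoint (P (g j)) (Q (g j)) (P (g j')) (Q (g j'))"
    using T(2) gT inj_onD[OF ginj] by (metis atLeastLessThan_iff zero_le)
  ultimately have "subdiv_in V E en r B (card T) (\<lambda>j. P (g j)) (\<lambda>j. Q (g j))"
    unfolding subdiv_in_iff using assms(1) by blast
  then show ?thesis using T(3) by auto
qed

section \<open>Standard fraternal completions\<close>

locale std_completion =
  fixes V :: "'v set" and EG :: "'e set" and ends :: "'e \<Rightarrow> 'v set"
    and t h :: "'e \<Rightarrow> 'v" and Es :: "nat \<Rightarrow> 'e set" and \<kappa> :: "'e \<Rightarrow> 'e \<times> 'e" and p :: nat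
  assumes standard: "standard_fc V EG ends t h Es \<kappa> p"
begin

lemma finite_V: "finite V"
  and finite_EG: "finite EG"
  and ends_in_V: "e \<in> EG \<Longrightarrow> ends e \<subseteq> V"
  and ends_orient: "e \<in> EG \<Longrightarrow> ends e = {t e, h e}"
  using standard unfolding standard_fc_def loopless_multigraph_def is_orientation_def by auto

lemma completion: "fraternal_completion V t h EG Es \<kappa> p"
  using standard by (simp add: standard_fc_def)

lemma level_one: "Es 1 = EG"
  and finite_level: "1 \<le> i \<Longrightarrow> i \<le> p \<Longrightarrow> finite (Es i)"
  and level_in_V: "1 \<le> i \<Longrightarrow> i \<le> p \<Longrightarrow> e \<in> Es i \<Longrightarrow> t e \<in> V \<and> h e \<in> V"
  using completion unfolding fraternal_completion_def by auto

lemma level_decomp: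
  "2 \<le> i \<Longrightarrow> i \<le> p \<Longrightarrow> e \<in> Es i \<Longrightarrow> \<exists>j k f g. 1 \<le> j \<and> 1 \<le> k \<and> j + k = i \<and>
     f \<in> Es j \<and> g \<in> Es k \<and> \<kappa> e = (f, g) \<and> t f \<noteq> t g \<and> t e = t f \<and> h e = t g \<and> h f = h g"
  using completion unfolding fraternal_completion_def by auto

lemma fraternal_unique:
  "1 \<le> i \<Longrightarrow> 1 \<le> j \<Longrightarrow> i + j \<le> p \<Longrightarrow> f \<in> Es i \<Longrightarrow> g \<in> Es j \<Longrightarrow> t f \<noteq> t g \<Longrightarrow>
     h f = h g \<Longrightarrow> \<exists>!e. e \<in> Es (i + j) \<and> (\<kappa> e = (f, g) \<or> \<kappa> e = (g, f))"
  using completion unfolding fraternal_completion_def by blast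

lemma standard_indeg:
  "1 \<le> i \<Longrightarrow> i \<le> p \<Longrightarrow> int (max_indeg V (Es i) h) = \<lceil>tgrad_m V (Es i) (\<lambda>e. {t e, h e}) 0\<rceil>"
  using standard by (simp add: standard_fc_def)

lemma kappa_inj_on_level:
  assumes "2 \<le> j" "j \<le> p"
  shows "inj_on \<kappa> (Es j)"
proof (rule inj_onI)
  fix e e' assume e: "e \<in> Es j" "e' \<in> Es j" "\<kappa> e = \<kappa> e'"
  obtain j1 k f g where d: "1 \<le> j1" "1 \<le> k" "j1 + k = j" "f \<in> Es j1" "g \<in> Es k"
      "\<kappa> e = (f, g)" "t f \<noteq> t g" "h f = h g"
    using level_decomp[OF assms e(1)] by blast
  with fraternal_unique[OF d(1,2) _ d(4,5,7,8)] assms(2) e show "e = e'" by metis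
qed

subsection \<open>Expansions of arcs into walks of G\<close>

text \<open>Unfolding the fraternal pairs recursively turns an arc e of level j into a walk
  of G with exactly j edges from t e to h e: for kappa e = (f, g) the walk of f (from t f to
  the common head) is followed by the reversed walk of g (back to t g = h e).\<close>
inductive expansion :: "nat \<Rightarrow> 'e \<Rightarrow> 'v list \<Rightarrow> 'e list \<Rightarrow> bool" where
  expansion_one: "1 \<le> p \<Longrightarrow> e \<in> Es 1 \<Longrightarrow> expansion 1 e [t e, h e] [e]"
| expansion_glue: "1 \<le> j1 \<Longrightarrow> 1 \<le> j2 \<Longrightarrow> j1 + j2 \<le> p \<Longrightarrow> e \<in> Es (j1 + j2) \<Longrightarrow>
     \<kappa> e = (f, g) \<Longrightarrow> h f = h g \<Longrightarrow> t e = t f \<Longrightarrow> h e = t g \<Longrightarrow>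
     expansion j1 f ws1 es1 \<Longrightarrow> expansion j2 g ws2 es2 \<Longrightarrow>
     expansion (j1 + j2) e (ws1 @ tl (rev ws2)) (es1 @ rev es2)"

lemma expansion_props:
  "expansion j e ws es \<Longrightarrow> e \<in> Es j \<and> 1 \<le> j \<and> j \<le> p \<and> length es = j \<and>
     walk EG ends ws es \<and> hd ws = t e \<and> last ws = h e"
proof (induction rule: expansion.induct)
  case (expansion_one e)
  then show ?case using level_one ends_orient by auto
next
  case (expansion_glue j1 j2 e f g ws1 es1 ws2 es2)
  have w1: "walk EG ends ws1 es1" and w2: "walk EG ends (rev ws2) (rev es2)"
    using expansion_glue walk_rev by auto
  obtain xs where xs: "ws1 = xs @ [h f]"
    using expansion_glue walk_length[OF w1] by (cases ws1 rule: rev_cases) auto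
  obtain zs where zs: "ws2 = zs @ [h f]"
    using expansion_glue walk_length[OF w2] by (cases ws2 rule: rev_cases) auto
  with expansion_glue walk_length[OF w2] have "zs \<noteq> []" by auto
  have "walk EG ends (ws1 @ tl (rev ws2)) (es1 @ rev es2)"
    using walk_append[of EG ends xs "h f" es1 "rev zs" "rev es2"] w1 w2 xs zs by simp
  moreover have "last (ws1 @ tl (rev ws2)) = h e"
    using expansion_glue zs \<open>zs \<noteq> []\<close> by (simp add: last_rev)
  ultimately show ?case using expansion_glue xs by (cases xs) auto
qed

lemma expansion_exists: "1 \<le> j \<Longrightarrow> j \<le> p \<Longrightarrow> e \<in> Es j \<Longrightarrow> \<exists>ws es. expansion j e ws es"
proof (induction j arbitrary: e rule: less_induct)
  case (less j)
  show ?case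
  proof (cases "j = 1")
    case True
    then show ?thesis using less expansion_one by blast
  next
    case False
    then obtain j1 k f g where d: "1 \<le> j1" "1 \<le> k" "j1 + k = j" "f \<in> Es j1" "g \<in> Es k"
        "\<kappa> e = (f, g)" "t e = t f" "h e = t g" "h f = h g"
      using level_decomp[of j e] less.prems by fastforce
    obtain ws1 es1 where "expansion j1 f ws1 es1" using less.IH[of j1 f] d less.prems by auto
    moreover obtain ws2 es2 where "expansion k g ws2 es2" using less.IH[of k g] d less.prems by auto
    ultimately have "expansion (j1 + k) e (ws1 @ tl (rev ws2)) (es1 @ rev es2)"
      using d less.prems by (intro expansion_glue) auto
    with d(3) show ?thesis by blast
  qed
qed

lemma expansion_level_one: "expansion 1 e ws es \<Longrightarrow> ws = [t e, h e] \<and> es = [e]"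
  by (cases rule: expansion.cases) auto

subsection \<open>Counting the arcs whose expansion passes through a vertex\<close>

definition lower_in :: "nat \<Rightarrow> 'v \<Rightarrow> 'e set" where
  "lower_in L z = {f. \<exists>k. 1 \<le> k \<and> k < L \<and> f \<in> Es k \<and> h f = z}"

definition through :: "nat \<Rightarrow> 'v \<Rightarrow> 'e set" where
  "through j v = {e \<in> Es j. \<exists>ws es. expansion j e ws es \<and> v \<in> set (interior ws)}"

definition through_upto :: "nat \<Rightarrow> 'v \<Rightarrow> 'e set" where
  "through_upto j v = {e. \<exists>k. 1 \<le> k \<and> k \<le> j \<and> e \<in> through k v}"

definition indeg_sum :: "nat \<Rightarrow> nat" where
  "indeg_sum L = (\<Sum>k\<in>{1..<L}. max_indeg V (Es k) h)"

lemma indeg_le_max_indeg: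
  assumes "1 \<le> k" "k \<le> p"
  shows "card {f \<in> Es k. h f = z} \<le> max_indeg V (Es k) h"
proof (cases "z \<in> V")
  case True
  then show ?thesis unfolding max_indeg_def using finite_V by (intro Max_ge) auto
next
  case False
  then have "{f \<in> Es k. h f = z} = {}" using level_in_V assms by auto
  then show ?thesis by (metis card.empty le0)
qed

lemma card_lower_in:
  assumes "L \<le> Suc p"
  shows "finite (lower_in L z) \<and> card (lower_in L z) \<le> indeg_sum L"
proof -
  have eq: "lower_in L z = (\<Union>k\<in>{1..<L}. {f \<in> Es k. h f = z})" unfolding lower_in_def by auto
  have "card (lower_in L z) \<le> (\<Sum>k\<in>{1..<L}. card {f \<in> Es k. h f = z})"
    unfolding eq by (rule card_UN_le) simp
  also have "\<dots> \<le> indeg_sum L"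
    unfolding indeg_sum_def using assms by (intro sum_mono indeg_le_max_indeg) auto
  finally show ?thesis unfolding eq using finite_level assms by auto
qed

lemma finite_through_upto: "j \<le> p \<Longrightarrow> finite (through_upto j v)"
  unfolding through_upto_def through_def
  by (rule finite_subset[of _ "\<Union>k\<in>{1..j}. Es k"]) (use finite_level in auto)

lemma through_level_one: "through 1 v = {}"
proof -
  have "set (interior ws) = {}" if "expansion 1 e ws es" for e ws es
    using expansion_level_one[OF that] by (simp add: interior_def)
  then show ?thesis unfolding through_def by fastforce
qed

text \<open>If the expansion of e = (f, g) passes through v, then either v is the common head of
  f and g, or the expansion of f or of g already passes through v.\<close>
lemma kappa_through:
  assumes "2 \<le> j" "j \<le> L" "L \<le> p" "e \<in> through j v"
  shows "\<kappa> e \<in> (lower_in L v \<times> lower_in L v) \<union> Sigma (through_upto (j - 1) v) (\<lambda>f. lower_in L (h f))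
              \<union> prod.swap ` Sigma (through_upto (j - 1) v) (\<lambda>g. lower_in L (h g))"
proof -
  from assms(4) obtain ws es where r: "expansion j e ws es" and v: "v \<in> set (interior ws)"
    unfolding through_def by auto
  from r show ?thesis
  proof (cases rule: expansion.cases)
    case expansion_one
    then show ?thesis using v by (simp add: interior_def)
  next
    case (expansion_glue j1 j2 f g ws1 es1 ws2 es2)
    have "expansion j1 f ws1 es1" "expansion j2 g ws2 es2" using expansion_glue by auto
    note pf = expansion_props[OF this(1)] and pg = expansion_props[OF this(2)]
    have f: "f \<in> lower_in L (h f)" and g: "g \<in> lower_in L (h f)"
      unfolding lower_in_def using pf pg expansion_glue assms by auto
    have "length ws1 \<ge> 2" "length ws2 \<ge> 2" using pf pg walk_length by fastforce+
    with interior_glue[of ws1 ws2] v expansion_glue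
    consider "v \<in> set (interior ws1)" | "v = h f" | "v \<in> set (interior ws2)"
      using pf by auto
    then show ?thesis
    proof cases
      case 1
      then have "f \<in> through_upto (j - 1) v"
        unfolding through_upto_def through_def using pf expansion_glue by force
      then show ?thesis using expansion_glue g by auto
    next
      case 2
      then show ?thesis using expansion_glue f g by auto
    next
      case 3
      then have "g \<in> through_upto (j - 1) v"
        unfolding through_upto_def through_def using pg expansion_glue by force
      moreover have "f \<in> lower_in L (h g)" using f expansion_glue by simp
      ultimately show ?thesis using expansion_glue by (auto simp: image_iff)
    qed
  qed
qed

lemma card_through:
  assumes "1 \<le> j" "j \<le> L" "L \<le> p"
  shows "card (through j v) \<le> indeg_sum L * indeg_sum L + 2 * card (through_upto (j - 1) v) * indeg_sum L"
proof (cases "j = 1")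
  case True
  then show ?thesis using through_level_one by simp
next
  case False
  then have j: "2 \<le> j" using assms by simp
  let ?M = "indeg_sum L" and ?A = "through_upto (j - 1) v"
  let ?X1 = "lower_in L v \<times> lower_in L v" and ?X2 = "Sigma ?A (\<lambda>f. lower_in L (h f))"
  have low: "\<And>z. finite (lower_in L z) \<and> card (lower_in L z) \<le> ?M"
    using card_lower_in assms by simp
  have finA: "finite ?A" using finite_through_upto assms by simp
  have c1: "card ?X1 \<le> ?M * ?M" using low by (simp add: card_cartesian_product mult_le_mono)
  have "card ?X2 = (\<Sum>f\<in>?A. card (lower_in L (h f)))" using finA low by (simp add: card_SigmaI)
  also have "\<dots> \<le> card ?A * ?M" using sum_mono[of ?A "\<lambda>f. card (lower_in L (h f))" "\<lambda>_. ?M"] low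
    by simp
  finally have c2: "card ?X2 \<le> card ?A * ?M" .
  have c3: "card (prod.swap ` ?X2) \<le> card ?A * ?M" using c2 card_image_le[of ?X2 prod.swap] finA low
    by (meson finite_SigmaI le_trans)
  have "inj_on \<kappa> (through j v)"
    using assms by (intro inj_on_subset[OF kappa_inj_on_level[OF j]]) (auto simp: through_def)
  then have "card (through j v) = card (\<kappa> ` through j v)" by (simp add: card_image)
  also have "\<dots> \<le> card (?X1 \<union> ?X2 \<union> prod.swap ` ?X2)"
  proof (rule card_mono)
    show "finite (?X1 \<union> ?X2 \<union> prod.swap ` ?X2)" using finA low by auto
    show "\<kappa> ` through j v \<subseteq> ?X1 \<union> ?X2 \<union> prod.swap ` ?X2"
      using kappa_through[OF j assms(2,3)] by blast
  qed
  also have "\<dots> \<le> card ?X1 + card ?X2 + card (prod.swap ` ?X2)"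
    by (meson card_Un_le le_trans add_le_mono order_refl)
  finally show ?thesis using c1 c2 c3 by simp
qed

lemma card_through_upto:
  assumes "j \<le> L" "L \<le> p"
  shows "card (through_upto j v) + 1 \<le> (indeg_sum L + 1) ^ (2 * j)"
  using assms(1)
proof (induction j)
  case 0
  then show ?case by (simp add: through_upto_def)
next
  case (Suc j)
  let ?M = "indeg_sum L" and ?a = "card (through_upto j v)"
  have "through_upto (Suc j) v = through_upto j v \<union> through (Suc j) v"
    unfolding through_upto_def by (auto simp: le_Suc_eq)
  then have "card (through_upto (Suc j) v) \<le> ?a + card (through (Suc j) v)"
    by (simp add: card_Un_le)
  also have "card (through (Suc j) v) \<le> ?M * ?M + 2 * ?a * ?M"
    using card_through[of "Suc j" L v] Suc.prems assms(2) by simp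
  finally have "card (through_upto (Suc j) v) + 1 \<le> (?a + 1) * (?M + 1) ^ 2"
    by (simp add: power2_eq_square algebra_simps)
  also have "\<dots> \<le> (?M + 1) ^ (2 * j) * (?M + 1) ^ 2"
    using Suc by (intro mult_right_mono) auto
  finally show ?case by (simp add: power_add[symmetric])
qed

lemma card_through_level:
  assumes "1 \<le> i" "i \<le> p"
  shows "finite (through i v) \<and> card (through i v) \<le> (indeg_sum i + 1) ^ (2 * i)"
proof -
  have sub: "through i v \<subseteq> through_upto i v" unfolding through_upto_def using assms by auto
  then have "card (through i v) \<le> card (through_upto i v)"
    using finite_through_upto assms by (intro card_mono) auto
  also have "\<dots> \<le> (indeg_sum i + 1) ^ (2 * i)" using card_through_upto[of i i v] assms by simp
  finally show ?thesis using finite_subset[OF sub] finite_through_upto assms by simp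
qed

subsection \<open>From dense subgraphs of a level to shallow topological minors of G\<close>

lemma expansion_conflict:
  assumes e: "expansion i e ws es" and e': "expansion i e' ws' es'" and "e \<noteq> e'"
    and conflict: "set (interior ws) \<inter> set (interior ws') \<noteq> {} \<or> set es \<inter> set es' \<noteq> {}"
  shows "\<exists>u\<in>set ws. e' \<in> through i u"
proof -
  note pe = expansion_props[OF e] and pe' = expansion_props[OF e']
  from conflict have "\<exists>u\<in>set ws. u \<in> set (interior ws')"
  proof (elim disjE)
    assume "set (interior ws) \<inter> set (interior ws') \<noteq> {}"
    then show ?thesis using interior_subset[of ws] by blast
  next
    assume "set es \<inter> set es' \<noteq> {}"
    then obtain \<epsilon> where \<epsilon>: "\<epsilon> \<in> set es" "\<epsilon> \<in> set es'" by blast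
    have "i \<noteq> 1"
    proof
      assume "i = 1"
      then have "es = [e]" "es' = [e']" using expansion_level_one e e' by auto
      with \<epsilon> \<open>e \<noteq> e'\<close> show False by simp
    qed
    then have "2 \<le> length es'" using pe' by auto
    then obtain u where "u \<in> ends \<epsilon>" "u \<in> set (interior ws')"
      using walk_edge_meets_interior[of EG ends ws' es' \<epsilon>] pe' \<epsilon>(2) by blast
    moreover have "ends \<epsilon> \<subseteq> set ws" using walk_edge_ends[of EG ends ws es \<epsilon>] pe \<epsilon>(1) by simp
    ultimately show ?thesis by blast
  qed
  then show ?thesis using e' pe' unfolding through_def by auto
qed

lemma card_crossing:
  assumes "expansion i e ws es"
  shows "finite (\<Union>u\<in>set ws. through i u) \<and>
         card (\<Union>u\<in>set ws. through i u) \<le> (i + 1) * (indeg_sum i + 1) ^ (2 * i)"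
proof -
  note pe = expansion_props[OF assms]
  let ?b = "(indeg_sum i + 1) ^ (2 * i)"
  have "card (\<Union>u\<in>set ws. through i u) \<le> (\<Sum>u\<in>set ws. card (through i u))"
    by (rule card_UN_le) simp
  also have "\<dots> \<le> card (set ws) * ?b"
    using sum_mono[of "set ws" "\<lambda>u. card (through i u)" "\<lambda>_. ?b"] card_through_level pe by simp
  also have "\<dots> \<le> length ws * ?b" by (intro mult_le_mono1 card_length)
  also have "length ws = i + 1" using walk_length pe by fastforce
  finally show ?thesis using card_through_level pe by auto
qed

lemma arc_branch_path:
  assumes "1 \<le> i" "i \<le> p" "e \<in> Es i" "t e \<in> B" "h e \<in> B" "t e \<noteq> h e"
  shows "\<exists>ws es P Q. expansion i e ws es \<and> branch_path V EG ends ((real i - 1) / 2) B P Q \<and>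
           set (interior P) \<subseteq> set (interior ws) \<and> set Q \<subseteq> set es"
proof -
  obtain ws es where x: "expansion i e ws es" using expansion_exists assms by blast
  note pe = expansion_props[OF x]
  obtain P Q where P: "walk EG ends P Q" "distinct P" "2 \<le> length P" "length P \<le> length ws"
      "hd P \<in> B" "last P \<in> B" "set (interior P) \<inter> B = {}"
      "set (interior P) \<subseteq> set (interior ws)" "set Q \<subseteq> set es"
    using walk_contains_B_path[of EG ends ws es B] pe assms by auto
  have "length ws = i + 1" using walk_length pe by fastforce
  then have "real (length P) \<le> real i + 1" using P(4) by simp
  then have "real (length P) \<le> 2 * ((real i - 1) / 2) + 2" by (simp add: field_simps)
  then have "branch_path V EG ends ((real i - 1) / 2) B P Q"
    using P ends_in_V by (intro walk_branch_path) auto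
  then show ?thesis using x P by blast
qed

text \<open>The key estimate: a dense subgraph of the level-i graph H_i gives, by replacing each
  of its arcs with a branch path inside its expansion and discarding conflicting paths, a
  (i-1)/2-shallow topological minor of G of proportional density.\<close>
lemma density_transfer:
  assumes i: "1 \<le> i" "i \<le> p" and "B \<noteq> {}"
    and sd: "subdiv_in V (Es i) (\<lambda>e. {t e, h e}) 0 B m P Q"
  shows "real m / real (card B) \<le>
           real ((i + 1) * (indeg_sum i + 1) ^ (2 * i) + 1) * tgrad_m V EG ends ((real i - 1) / 2)"
proof -
  define K where "K = (i + 1) * (indeg_sum i + 1) ^ (2 * i)"
  define r where "r = (real i - 1) / 2"
  obtain q where q: "inj_on q {..<m}"
      "\<forall>k<m. q k \<in> Es i \<and> (\<exists>a b. a \<noteq> b \<and> a \<in> B \<and> b \<in> B \<and> {t (q k), h (q k)} = {a, b})"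
    using subdiv_zero_edges[OF sd] by blast
  then have "\<forall>k<m. q k \<in> Es i \<and> t (q k) \<in> B \<and> h (q k) \<in> B \<and> t (q k) \<noteq> h (q k)"
    by (auto simp: doubleton_eq_iff)
  then have "\<forall>k<m. \<exists>ws es P Q. expansion i (q k) ws es \<and> branch_path V EG ends r B P Q \<and>
       set (interior P) \<subseteq> set (interior ws) \<and> set Q \<subseteq> set es"
    unfolding r_def using arc_branch_path i by simp
  then obtain WS ES PP QQ where
      X: "\<And>k. k < m \<Longrightarrow> expansion i (q k) (WS k) (ES k)" and
      Pb: "\<And>k. k < m \<Longrightarrow> branch_path V EG ends r B (PP k) (QQ k)" and
      PI: "\<And>k. k < m \<Longrightarrow> set (interior (PP k)) \<subseteq> set (interior (WS k))" and
      PQ: "\<And>k. k < m \<Longrightarrow> set (QQ k) \<subseteq> set (ES k)"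
    by metis
  have "card {k'\<in>{..<m}. k' \<noteq> k \<and> \<not> internally_disjoint (PP k) (QQ k) (PP k') (QQ k')} \<le> K"
    if k: "k < m" for k
  proof -
    let ?C = "{k'\<in>{..<m}. k' \<noteq> k \<and> \<not> internally_disjoint (PP k) (QQ k) (PP k') (QQ k')}"
    let ?Y = "\<Union>u\<in>set (WS k). through i u"
    have "q k' \<in> ?Y" if k': "k' \<in> ?C" for k'
    proof -
      have "set (interior (WS k)) \<inter> set (interior (WS k')) \<noteq> {} \<or> set (ES k) \<inter> set (ES k') \<noteq> {}"
        using k' PI[of k] PI[of k'] PQ[of k] PQ[of k'] k unfolding internally_disjoint_def by auto
      moreover have "q k \<noteq> q k'" using inj_onD[OF q(1)] k k' by auto
      ultimately show ?thesis using expansion_conflict[OF X[OF k] X[of k']] k' by auto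
    qed
    then have "q ` ?C \<subseteq> ?Y" by auto
    moreover have "inj_on q ?C" using q(1) by (rule inj_on_subset) auto
    ultimately have "card ?C \<le> card ?Y"
      using card_crossing[OF X[OF k]] by (intro card_inj_on_le) auto
    also have "\<dots> \<le> K" unfolding K_def using card_crossing[OF X[OF k]] by simp
    finally show ?thesis .
  qed
  moreover have BV: "B \<subseteq> V" using sd unfolding subdiv_in_iff by simp
  ultimately obtain m' P' Q' where m': "m \<le> (K + 1) * m'" "subdiv_in V EG ends r B m' P' Q'"
    using subdiv_from_sparse_paths[of B V m EG ends r PP QQ K] Pb by auto
  have B: "0 < real (card B)" using \<open>B \<noteq> {}\<close> BV finite_V by (simp add: card_gt_0_iff finite_subset)
  have "real m' / real (card B) \<le> tgrad_m V EG ends r"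
    using tgrad_ge[OF finite_EG \<open>B \<noteq> {}\<close> m'(2)] .
  then have "real m' \<le> tgrad_m V EG ends r * real (card B)" using B by (simp add: divide_le_eq)
  moreover have "real m \<le> real (K + 1) * real m'" using m'(1) by (metis of_nat_le_iff of_nat_mult)
  ultimately have "real m \<le> real (K + 1) * (tgrad_m V EG ends r * real (card B))"
    by (meson mult_left_mono of_nat_0_le_iff order_trans)
  then show ?thesis unfolding pos_divide_le_eq[OF B] K_def r_def by (simp add: mult.assoc)
qed

text \<open>For a standard completion the in-degree of level i is controlled by the density of
  H_i, hence by the density of the shallow topological minors of G.\<close>
lemma level_indeg_bound:
  assumes "1 \<le> i" "i \<le> p"
  shows "real (max_indeg V (Es i) h) \<le>
    real ((i + 1) * (indeg_sum i + 1) ^ (2 * i) + 1) * tgrad_m V EG ends ((real i - 1) / 2) + 1"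
    (is "_ \<le> ?c + 1")
proof -
  have "0 \<le> ?c" using tgrad_nonneg[OF finite_EG] by (intro mult_nonneg_nonneg) auto
  then have "tgrad_m V (Es i) (\<lambda>e. {t e, h e}) 0 \<le> ?c"
    using density_transfer[OF assms] by (rule tgrad_le)
  moreover have "real (max_indeg V (Es i) h) = of_int \<lceil>tgrad_m V (Es i) (\<lambda>e. {t e, h e}) 0\<rceil>"
    using standard_indeg[OF assms] by (metis of_int_of_nat_eq)
  moreover have "of_int \<lceil>tgrad_m V (Es i) (\<lambda>e. {t e, h e}) 0\<rceil> \<le> tgrad_m V (Es i) (\<lambda>e. {t e, h e}) 0 + 1"
    by (rule of_int_ceiling_le_add_one)
  ultimately show ?thesis by linarith
qed

section \<open>Polynomial bounds, level by level\<close>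

text \<open>Polynomial bounds for the levels below i, each in terms of the density at its own
  depth, combine into a polynomial bound for indeg_sum i in terms of the density at the
  depth (i-1)/2 of level i, since that density is monotone in the depth.\<close>
lemma indeg_sum_poly:
  assumes lower: "\<And>k. k \<in> {1..<i} \<Longrightarrow> 0 \<le> c k \<and>
      real (max_indeg V (Es k) h) \<le> c k * (tgrad_m V EG ends ((real k - 1) / 2) + 1) ^ N k"
  shows "real (indeg_sum i) \<le>
    (\<Sum>k\<in>{1..<i}. c k) * (tgrad_m V EG ends ((real i - 1) / 2) + 1) ^ (\<Sum>k\<in>{1..<i}. N k)"
proof -
  define d where "d k = tgrad_m V EG ends ((real k - 1) / 2)" for k
  have "real (max_indeg V (Es k) h) \<le> c k * (d i + 1) ^ (\<Sum>k\<in>{1..<i}. N k)"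
    if k: "k \<in> {1..<i}" for k
  proof -
    have "0 \<le> d k" "d k \<le> d i" unfolding d_def using k tgrad_nonneg[OF finite_EG]
      by (auto intro!: tgrad_mono[OF finite_EG])
    then have "(d k + 1) ^ N k \<le> (d i + 1) ^ N k" by (intro power_mono) auto
    also have "\<dots> \<le> (d i + 1) ^ (\<Sum>k\<in>{1..<i}. N k)"
      using k \<open>0 \<le> d k\<close> \<open>d k \<le> d i\<close> by (intro power_increasing member_le_sum) auto
    finally have "c k * (d k + 1) ^ N k \<le> c k * (d i + 1) ^ (\<Sum>k\<in>{1..<i}. N k)"
      using lower[OF k] by (intro mult_left_mono) auto
    moreover have "real (max_indeg V (Es k) h) \<le> c k * (d k + 1) ^ N k"
      using lower[OF k] unfolding d_def by simp
    ultimately show ?thesis by linarith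
  qed
  then have "real (indeg_sum i) \<le> (\<Sum>k\<in>{1..<i}. c k * (d i + 1) ^ (\<Sum>k\<in>{1..<i}. N k))"
    unfolding indeg_sum_def of_nat_sum by (rule sum_mono)
  then show ?thesis unfolding d_def by (simp add: sum_distrib_right)
qed

lemma level_indeg_poly:
  assumes i: "1 \<le> i" "i \<le> p" and "0 \<le> C"
    and M: "real (indeg_sum i) \<le> C * (tgrad_m V EG ends ((real i - 1) / 2) + 1) ^ N"
  shows "real (max_indeg V (Es i) h) \<le>
    real (i + 2) * (C + 1) ^ (2 * i) * (tgrad_m V EG ends ((real i - 1) / 2) + 1) ^ (2 * i * N + 1)"
proof -
  define d where "d = tgrad_m V EG ends ((real i - 1) / 2)"
  define M where "M = real (indeg_sum i)"
  define X where "X = real (i + 2) * (C + 1) ^ (2 * i) * (d + 1) ^ (2 * i * N)"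
  have d: "0 \<le> d" unfolding d_def by (rule tgrad_nonneg[OF finite_EG])
  have one: "1 \<le> (d + 1) ^ N" using d by simp
  have "M + 1 \<le> (C + 1) * (d + 1) ^ N"
    using M one \<open>0 \<le> C\<close> unfolding M_def d_def by (simp add: algebra_simps)
  then have "(M + 1) ^ (2 * i) \<le> ((C + 1) * (d + 1) ^ N) ^ (2 * i)"
    unfolding M_def by (intro power_mono) auto
  also have "\<dots> = (C + 1) ^ (2 * i) * (d + 1) ^ (2 * i * N)"
    by (simp add: power_mult_distrib power_mult[symmetric] mult.commute)
  finally have pow: "(M + 1) ^ (2 * i) \<le> (C + 1) ^ (2 * i) * (d + 1) ^ (2 * i * N)" .
  have "1 \<le> (M + 1) ^ (2 * i)" unfolding M_def by simp
  then have "real ((i + 1) * (indeg_sum i + 1) ^ (2 * i) + 1) \<le> real (i + 2) * (M + 1) ^ (2 * i)"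
    unfolding M_def by (simp add: algebra_simps)
  also have "\<dots> \<le> X" unfolding X_def using pow by (simp add: mult.assoc)
  finally have K: "real ((i + 1) * (indeg_sum i + 1) ^ (2 * i) + 1) \<le> X" .
  have "1 * 1 * 1 \<le> X" unfolding X_def using d \<open>0 \<le> C\<close> by (intro mult_mono) auto
  then have X1: "1 \<le> X" by simp
  have "real (max_indeg V (Es i) h) \<le> real ((i + 1) * (indeg_sum i + 1) ^ (2 * i) + 1) * d + 1"
    using level_indeg_bound[OF i] unfolding d_def .
  also have "\<dots> \<le> X * d + 1" using K d by (intro add_right_mono mult_right_mono)
  also have "\<dots> \<le> X * (d + 1)" using X1 by (simp add: algebra_simps)
  also have "\<dots> = real (i + 2) * (C + 1) ^ (2 * i) * (d + 1) ^ (2 * i * N + 1)"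
    unfolding X_def by (simp only: power_add power_one_right mult.assoc)
  finally show ?thesis unfolding d_def .
qed

end

definition indeg_poly_bounded :: "nat \<Rightarrow> real \<Rightarrow> nat \<Rightarrow> bool" where
  "indeg_poly_bounded i c N \<longleftrightarrow>
     (\<forall>(V :: nat set) (EG :: nat set) ends t h Es \<kappa> p. standard_fc V EG ends t h Es \<kappa> p \<and> i \<le> p \<longrightarrow>
        real (max_indeg V (Es i) h) \<le> c * (tgrad_m V EG ends ((real i - 1) / 2) + 1) ^ N)"

lemma indeg_poly_bounded_exists: "1 \<le> i \<Longrightarrow> \<exists>c N. 0 \<le> c \<and> indeg_poly_bounded i c N"
proof (induction i rule: less_induct)
  case (less i)
  then have "\<forall>k\<in>{1..<i}. \<exists>c N. 0 \<le> c \<and> indeg_poly_bounded k c N" by auto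
  then obtain c N where cN: "\<And>k. k \<in> {1..<i} \<Longrightarrow> 0 \<le> c k \<and> indeg_poly_bounded k (c k) (N k)"
    by metis
  define C where "C = (\<Sum>k\<in>{1..<i}. c k)"
  have "0 \<le> C" unfolding C_def using cN by (intro sum_nonneg) auto
  have "indeg_poly_bounded i (real (i + 2) * (C + 1) ^ (2 * i)) (2 * i * (\<Sum>k\<in>{1..<i}. N k) + 1)"
    unfolding indeg_poly_bounded_def
  proof (intro allI impI, elim conjE)
    fix V :: "nat set" and EG :: "nat set" and ends t h Es \<kappa> p
    assume sfc: "standard_fc V EG ends t h Es \<kappa> p" and "i \<le> p"
    interpret std_completion V EG ends t h Es \<kappa> p by unfold_locales (rule sfc)
    have "0 \<le> c k \<and>
        real (max_indeg V (Es k) h) \<le> c k * (tgrad_m V EG ends ((real k - 1) / 2) + 1) ^ N k"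
      if k: "k \<in> {1..<i}" for k
    proof -
      have "k \<le> p" using k \<open>i \<le> p\<close> by simp
      with cN[OF k] sfc show ?thesis unfolding indeg_poly_bounded_def by blast
    qed
    then have "real (indeg_sum i) \<le> C * (tgrad_m V EG ends ((real i - 1) / 2) + 1) ^ (\<Sum>k\<in>{1..<i}. N k)"
      unfolding C_def by (rule indeg_sum_poly)
    then show "real (max_indeg V (Es i) h) \<le> real (i + 2) * (C + 1) ^ (2 * i) *
        (tgrad_m V EG ends ((real i - 1) / 2) + 1) ^ (2 * i * (\<Sum>k\<in>{1..<i}. N k) + 1)"
      by (rule level_indeg_poly[OF less.prems \<open>i \<le> p\<close> \<open>0 \<le> C\<close>])
  qed
  moreover have "0 \<le> real (i + 2) * (C + 1) ^ (2 * i)" using \<open>0 \<le> C\<close> by simp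
  ultimately show ?case by blast
qed

theorem mainTheorem14:
  fixes i :: nat
  assumes "i \<ge> 1"
  shows "\<exists>R :: real poly. \<forall>(V :: nat set) (EG :: nat set) ends t h Es \<kappa> p.
           standard_fc V EG ends t h Es \<kappa> p \<and> i \<le> p \<longrightarrow>
           real (max_indeg V (Es i) h) \<le> poly R (tgrad_m V EG ends ((real i - 1) / 2))"
proof -
  obtain c N where bound: "indeg_poly_bounded i c N" using indeg_poly_bounded_exists assms by blast
  have poly_R: "poly (smult c ([:1, 1:] ^ N)) x = c * (x + 1) ^ N" for x :: real
    by (simp add: poly_power add.commute)
  have "\<forall>(V :: nat set) (EG :: nat set) ends t h Es \<kappa> p.
           standard_fc V EG ends t h Es \<kappa> p \<and> i \<le> p \<longrightarrow>
           real (max_indeg V (Es i) h) \<le> poly (smult c ([:1, 1:] ^ N)) (tgrad_m V EG ends ((real i - 1) / 2))"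
    using bound unfolding indeg_poly_bounded_def poly_R .
  then show ?thesis by blast
qed

end
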